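(* Let $(c_1,\dots,c_m)\in\mathbb{Z}^m$ be a quiddity cycle with $m>3$. Then there are indices $j,k\in\{1,\dots,m\}$ such that: - $|j-k|>1$ and $\{j,k\}\ne\{1,m\}$, i.e. $j,k$ are not cyclically adjacent; - $|c_j|<2$ and $|c_k|<2$.
   Context: $\eta(c)=\begin{pmatrix}c&-1\\1&0\end{pmatrix}$. A quiddity cycle is $(c_1,\dots,c_m)$ with $\eta(c_1)\cdots\eta(c_m)=-I$. *)

theory Defs
  imports "HOL-Analysis.Analysis"
begin

definition eta :: "int \<Rightarrow> int^2^2" where
  "eta c = vector [vector [c, -1], vector [1, 0]]"

definition eta_prod :: "int list \<Rightarrow> int^2^2" where
  "eta_prod cs = foldr (\<lambda>c M. eta c ** M) cs (mat 1)"

definition quiddity_cycle :: "int list \<Rightarrow> bool" where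
  "quiddity_cycle cs \<longleftrightarrow> eta_prod cs = - mat 1"

end

theory Submission
  imports Defs
begin

text \<open>Rotating a quiddity cycle gives a quiddity cycle, so every window of \<open>m - 2\<close> cyclically
consecutive entries may be assumed to be the initial one. If none of \<open>c\<^sub>1, \<dots>, c\<^sub>m\<^sub>-\<^sub>2\<close> had
absolute value below 2, the first column \<open>(p, q)\<close> of \<open>\<eta>(c\<^sub>1)\<cdots>\<eta>(c\<^sub>m\<^sub>-\<^sub>2)\<close> would satisfy
\<open>|p| > max(|q|, m - 2)\<close>; but multiplying by \<open>\<eta>(c\<^sub>m\<^sub>-\<^sub>1) \<eta>(c\<^sub>m)\<close> must give \<open>-I\<close>, which forces
\<open>p = 1\<close>. Hence every such window contains a small entry, and two windows starting next to a
small entry produce a second, non-adjacent one.\<close>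

lemma eta_prod_Nil [simp]: "eta_prod [] = mat 1"
  by (simp add: eta_prod_def)

lemma eta_prod_Cons [simp]: "eta_prod (x # xs) = eta x ** eta_prod xs"
  by (simp add: eta_prod_def)

lemma eta_prod_append: "eta_prod (xs @ ys) = eta_prod xs ** eta_prod ys"
  by (induction xs) (simp_all add: matrix_mul_assoc)

lemma matrix_mul_uminus_left: "(- A) ** (B :: 'a::ring_1^'n^'m) = - (A ** B)"
  by (simp add: matrix_matrix_mult_def vec_eq_iff sum_negf)

lemma matrix_mul_uminus_right: "(A :: 'a::ring_1^'n^'m) ** (- B) = - (A ** B)"
  by (simp add: matrix_matrix_mult_def vec_eq_iff sum_negf)

definition eta_inv :: "int \<Rightarrow> int^2^2" where
  "eta_inv c = vector [vector [0, 1], vector [-1, c]]"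

lemma eta_inv_mult_eta: "eta_inv c ** eta c = mat 1"
  unfolding eta_inv_def eta_def
  by (simp add: matrix_matrix_mult_def vec_eq_iff forall_2 sum_2 mat_def)

lemma quiddity_cycle_rotate1:
  assumes "quiddity_cycle c"
  shows "quiddity_cycle (rotate1 c)"
proof (cases c)
  case Nil
  then show ?thesis using assms by simp
next
  case (Cons x xs)
  then have "eta x ** eta_prod xs = - mat 1"
    using assms by (simp add: quiddity_cycle_def)
  then have "eta_inv x ** (eta x ** eta_prod xs) = - eta_inv x"
    by (simp add: matrix_mul_uminus_right)
  then have "eta_prod xs = - eta_inv x"
    by (simp add: matrix_mul_assoc eta_inv_mult_eta)
  then have "eta_prod (xs @ [x]) = - mat 1"
    by (simp add: eta_prod_append matrix_mul_uminus_left eta_inv_mult_eta)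
  then show ?thesis
    using Cons by (simp add: quiddity_cycle_def)
qed

lemma quiddity_cycle_rotate: "quiddity_cycle c \<Longrightarrow> quiddity_cycle (rotate n c)"
  by (induction n) (simp_all add: quiddity_cycle_rotate1)

lemma eta_mult_first_column:
  "(eta c ** Q) $ 1 $ 1 = c * Q $ 1 $ 1 - Q $ 2 $ 1"
  "(eta c ** Q) $ 2 $ 1 = Q $ 1 $ 1"
  unfolding eta_def by (simp_all add: matrix_matrix_mult_def sum_2)

lemma eta_prod_first_column_grows:
  assumes "\<forall>x \<in> set cs. \<bar>x\<bar> \<ge> 2"
  shows "\<bar>eta_prod cs $ 2 $ 1\<bar> < \<bar>eta_prod cs $ 1 $ 1\<bar> \<and> length cs < \<bar>eta_prod cs $ 1 $ 1\<bar>"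
  using assms
proof (induction cs)
  case Nil
  then show ?case by (simp add: mat_def)
next
  case (Cons x xs)
  define p q where "p = eta_prod xs $ 1 $ 1" and "q = eta_prod xs $ 2 $ 1"
  have IH: "\<bar>q\<bar> < \<bar>p\<bar>" "length xs < \<bar>p\<bar>"
    using Cons unfolding p_def q_def by auto
  have "2 * \<bar>p\<bar> \<le> \<bar>x * p\<bar>"
    using Cons.prems by (simp add: abs_mult mult_right_mono)
  then have "\<bar>p\<bar> < \<bar>x * p - q\<bar>"
    using IH by linarith
  then show ?case
    using IH by (simp add: eta_mult_first_column flip: p_def q_def)
qed

lemma eta_prod_entry_before_last_two:
  assumes "eta_prod (xs @ [y, z]) = - mat 1"
  shows "eta_prod xs $ 1 $ 1 = 1"
proof -
  define P where "P = eta_prod xs"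
  have "P ** (eta y ** eta z) = - mat 1"
    using assms by (simp add: eta_prod_append P_def)
  then have "(P ** (eta y ** eta z)) $ 1 $ 1 = -1" "(P ** (eta y ** eta z)) $ 1 $ 2 = 0"
    by (simp_all add: mat_def)
  then have "P $ 1 $ 1 * (y * z - 1) + P $ 1 $ 2 * z = -1" "P $ 1 $ 2 = - P $ 1 $ 1 * y"
    unfolding eta_def by (simp_all add: matrix_matrix_mult_def sum_2)
  then show ?thesis
    by (simp add: P_def algebra_simps)
qed

lemma quiddity_cycle_small_entry_in_prefix:
  assumes "quiddity_cycle c" "length c \<ge> 3"
  shows "\<exists>i < length c - 2. \<bar>c ! i\<bar> < 2"
proof (rule ccontr)
  assume no_small: "\<not> ?thesis"
  define xs where "xs = take (length c - 2) c"
  have "length (drop (length c - 2) c) = 2"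
    using assms(2) by simp
  then obtain y z where "drop (length c - 2) c = [y, z]"
    by (metis length_0_conv length_Suc_conv numeral_2_eq_2)
  then have "c = xs @ [y, z]"
    unfolding xs_def by (metis append_take_drop_id)
  then have "eta_prod xs $ 1 $ 1 = 1"
    using assms(1) eta_prod_entry_before_last_two unfolding quiddity_cycle_def by metis
  moreover have "\<forall>x \<in> set xs. \<bar>x\<bar> \<ge> 2"
  proof
    fix x
    assume "x \<in> set xs"
    then obtain i where "i < length c - 2" "x = c ! i"
      by (auto simp: xs_def in_set_conv_nth)
    then show "\<bar>x\<bar> \<ge> 2"
      using no_small by force
  qed
  moreover have "length xs \<ge> 1"
    using assms(2) by (simp add: xs_def)
  ultimately show False
    using eta_prod_first_column_grows by fastforce
qed

lemma quiddity_cycle_small_entry_in_window: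
  assumes "quiddity_cycle c" "length c \<ge> 3"
  shows "\<exists>d. 2 \<le> d \<and> d < length c \<and> \<bar>c ! ((r + d) mod length c)\<bar> < 2"
proof -
  have "\<exists>t < length c - 2. \<bar>rotate (r + 2) c ! t\<bar> < 2"
    using quiddity_cycle_small_entry_in_prefix[OF quiddity_cycle_rotate[OF assms(1)]] assms(2)
    by (metis length_rotate)
  then obtain t where t: "t < length c - 2" "\<bar>rotate (r + 2) c ! t\<bar> < 2"
    by blast
  have "rotate (r + 2) c ! t = c ! ((r + (t + 2)) mod length c)"
    using t(1) by (subst nth_rotate) (auto simp: algebra_simps)
  then show ?thesis
    using t by (intro exI[of _ "t + 2"]) auto
qed

lemma non_adjacent_positions:
  fixes a d m :: nat
  assumes "a < m" "2 \<le> d" "d + 2 \<le> m"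
  defines "b \<equiv> (a + d) mod m"
  shows "a + 1 \<in> {1..m}" "b + 1 \<in> {1..m}"
    "\<bar>int (a + 1) - int (b + 1)\<bar> > 1" "{a + 1, b + 1} \<noteq> {1, m}"
proof -
  have "b = (if a + d < m then a + d else a + d - m)"
    using assms by (simp add: b_def le_mod_geq)
  then show "a + 1 \<in> {1..m}" "b + 1 \<in> {1..m}"
    "\<bar>int (a + 1) - int (b + 1)\<bar> > 1" "{a + 1, b + 1} \<noteq> {1, m}"
    using assms(1-3) by (auto simp: doubleton_eq_iff split: if_splits)
qed

text \<open>The window after \<open>a\<close> yields \<open>a + d\<close>; if that is \<open>a - 1\<close>, the window after \<open>a - 1\<close>
yields a position non-adjacent to \<open>a - 1\<close>, which at worst is \<open>a - 2\<close> and then non-adjacent to \<open>a\<close>.\<close>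

lemma cyclic_windows_non_adjacent_pair:
  fixes P :: "nat \<Rightarrow> bool" and m :: nat
  assumes "m \<ge> 4"
    and window: "\<And>r. \<exists>d. 2 \<le> d \<and> d < m \<and> P ((r + d) mod m)"
  shows "\<exists>a d. a < m \<and> 2 \<le> d \<and> d + 2 \<le> m \<and> P a \<and> P ((a + d) mod m)"
proof -
  obtain a where a: "a < m" "P a"
    using window[of 0] by (auto intro: mod_less_divisor)
  obtain d where d: "2 \<le> d" "d < m" "P ((a + d) mod m)"
    using window by blast
  show ?thesis
  proof (cases "d + 2 \<le> m")
    case True
    then show ?thesis using a d by blast
  next
    case False
    define b where "b = (a + (m - 1)) mod m"
    have "d = m - 1" using False d by simp
    then have b: "b < m" "P b"
      using d assms(1) by (simp_all add: b_def)
    obtain e where e: "2 \<le> e" "e < m" "P ((b + e) mod m)"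
      using window by blast
    show ?thesis
    proof (cases "e + 2 \<le> m")
      case True
      then show ?thesis using b e by blast
    next
      case False
      then have "e = m - 1"
        using e by simp
      then have "(b + e) mod m = (a + (m - 1) + (m - 1)) mod m"
        by (simp add: b_def mod_add_left_eq)
      also have "\<dots> = (a + (m - 2) + m) mod m"
        using assms(1) by (intro arg_cong[where f = "\<lambda>x. x mod m"]) arith
      finally have "(b + e) mod m = (a + (m - 2)) mod m"
        by simp
      then have "P ((a + (m - 2)) mod m)"
        using e by simp
      then have "a < m \<and> 2 \<le> m - 2 \<and> m - 2 + 2 \<le> m \<and> P a \<and> P ((a + (m - 2)) mod m)"
        using a assms(1) by (simp add: le_diff_conv2)
      then show ?thesis
        by blast
    qed
  qed
qed

theorem corollary6p3:
  fixes c :: "int list"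
  assumes "quiddity_cycle c" and "length c > 3"
  shows "\<exists>j k. j \<in> {1..length c} \<and> k \<in> {1..length c} \<and>
           \<bar>int j - int k\<bar> > 1 \<and> {j, k} \<noteq> {1, length c} \<and>
           \<bar>c ! (j - 1)\<bar> < 2 \<and> \<bar>c ! (k - 1)\<bar> < 2"
proof -
  have "length c \<ge> 4" "length c \<ge> 3"
    using assms(2) by simp_all
  then obtain a d where ad: "a < length c" "2 \<le> d" "d + 2 \<le> length c"
    and small: "\<bar>c ! a\<bar> < 2" "\<bar>c ! ((a + d) mod length c)\<bar> < 2"
    using cyclic_windows_non_adjacent_pair[where P = "\<lambda>i. \<bar>c ! i\<bar> < 2"]
      quiddity_cycle_small_entry_in_window[OF assms(1)]
    by blast
  show ?thesis
    using non_adjacent_positions[OF ad] small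
    by (intro exI[of _ "a + 1"] exI[of _ "(a + d) mod length c + 1"]) simp
qed

end
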